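(* Let $F_0\in\mathcal F$. For all $x<1/2$ and all integers $t\ge 0$, $$F_{2,t}(x) = \frac{\left[2F_0(x)\right]^{2^t}}{2}.$$
   Context: Voters form a continuum uniformly distributed on $[0,1]$. Candidates occupy points of $[0,1]$ and each voter votes for the nearest candidate. For candidates at distinct positions, the vote share of a candidate is the measure of the set of voters closer to it than to any other candidate: half the distance between its left and right neighbours, where a leftmost candidate at $y$ additionally receives all of $[0,y]$ and a rightmost candidate at $y$ additionally receives all of $[y,1]$. The plurality winner is the candidate with largest vote share, ties broken uniformly at random. Write $\mathrm{plurality}(x_1,\dots,x_k)$ for the (random) position of the plurality winner. Replicator dynamics: given a probability distribution $F_0$ on $[0,1]$ (identified with its CDF) and an integer $k\ge 2$, set $F_{k,0}=F_0$, and for $t\ge 1$ let $F_{k,t}(x)=\Pr(\mathrm{plurality}(X_{1,t},\dots,X_{k,t})\le x)$, where $X_{1,t},\dots,X_{k,t}$ are i.i.d. with distribution $F_{k,t-1}$. $\mathcal F$ denotes the set of probability distributions on $[0,1]$ that are symmetric about $1/2$ and atomless (continuous CDF). *)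

theory Defs
  imports "HOL-Probability.Probability"
begin

text \<open>Vote share of the cell belonging to position y, given the finite set S of
occupied positions (y in S): half the distance to the left and right neighbours,
with the leftmost getting all of [0,y] and the rightmost all of [y,1].\<close>
definition cell_share :: "real set \<Rightarrow> real \<Rightarrow> real" where
  "cell_share S y =
     (if \<exists>z\<in>S. z < y then (y - Max {z\<in>S. z < y}) / 2 else y) +
     (if \<exists>z\<in>S. y < z then (Min {z\<in>S. y < z} - y) / 2 else 1 - y)"

text \<open>For distinct positions this is exactly the paper's vote share; co-located
candidates (a null event here) split their common cell equally.\<close>
definition vote_share :: "nat \<Rightarrow> (nat \<Rightarrow> real) \<Rightarrow> nat \<Rightarrow> real" where
  "vote_share k x i = cell_share (x ` {..<k}) (x i) / real (card {j. j < k \<and> x j = x i})"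

definition winners :: "nat \<Rightarrow> (nat \<Rightarrow> real) \<Rightarrow> nat set" where
  "winners k x = {i. i < k \<and> (\<forall>j<k. vote_share k x j \<le> vote_share k x i)}"

text \<open>Pr(plurality(x 0,...,x (k-1)) \<le> a), ties broken uniformly at random among winners.\<close>
definition plurality_le :: "nat \<Rightarrow> (nat \<Rightarrow> real) \<Rightarrow> real \<Rightarrow> real" where
  "plurality_le k x a = real (card {i \<in> winners k x. x i \<le> a}) / real (card (winners k x))"

text \<open>Replicator dynamics on CDFs: F_{k,0} = F0, F_{k,t+1}(a) = Pr(plurality(X_1..X_k) \<le> a)
with X_i i.i.d. with CDF F_{k,t} (distribution = Lebesgue-Stieltjes measure of the CDF).\<close>
primrec replicator :: "nat \<Rightarrow> (real \<Rightarrow> real) \<Rightarrow> nat \<Rightarrow> real \<Rightarrow> real" where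
  "replicator k F0 0 = F0"
| "replicator k F0 (Suc t) = (\<lambda>a. \<integral>x. plurality_le k x a
      \<partial>(PiM {..<k} (\<lambda>_. interval_measure (replicator k F0 t))))"

text \<open>F0 is in the class \<F>: the CDF of an atomless probability distribution on [0,1]
symmetric about 1/2.\<close>
definition in_calF :: "(real \<Rightarrow> real) \<Rightarrow> bool" where
  "in_calF F \<longleftrightarrow> mono F \<and> continuous_on UNIV F \<and>
     (\<forall>x<0. F x = 0) \<and> (\<forall>x\<ge>1. F x = 1) \<and> (\<forall>x. F (1 - x) = 1 - F x)"

end

theory Submission
  imports Defs
begin

text \<open>With two candidates the one closer to 1/2 wins, since its cell contains the median
voter. Hence F_{2,t+1}(a) is the probability that, of two independent draws from F = F_{2,t},
the one closer to 1/2 lies below a. For a <= 1/2 this happens exactly when that draw X is at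
most a and the other one falls outside [X, 1 - X]; the symmetries (X, Y) -> (Y, X) and
Y -> 1 - Y together with atomlessness give probability 2 F(a)^2, and reflecting about 1/2
gives 1 - 2 (1 - F(a))^2 for a > 1/2. This map preserves the class of symmetric atomless
distributions, so by induction F_{2,t+1}(x) = 2 F_{2,t}(x)^2 for x < 1/2, which iterates to
the closed form.\<close>

lemma vote_share_two:
  assumes ij: "{i, j} = {0, 1::nat}"
  shows "vote_share 2 x i =
    (if x i < x j then (x i + x j) / 2 else if x j < x i then 1 - (x i + x j) / 2 else 1 / 2)"
proof -
  have "i \<noteq> j"
    using ij by (auto simp: doubleton_eq_iff)
  have positions: "x ` {..<2} = {x i, x j}"
    using ij by (auto simp: less_2_cases_iff doubleton_eq_iff)
  have colocated: "{k. k < 2 \<and> x k = x i} = (if x i = x j then {i, j} else {i})"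
    using ij by (auto simp: less_2_cases_iff doubleton_eq_iff)
  consider "x i < x j" | "x j < x i" | "x i = x j" by linarith
  then show ?thesis
  proof cases
    case 1
    then have "{z \<in> {x i, x j}. x i < z} = {x j}" by auto
    with 1 show ?thesis
      unfolding vote_share_def cell_share_def positions colocated by (auto simp: field_simps)
  next
    case 2
    then have "{z \<in> {x i, x j}. z < x i} = {x j}" by auto
    with 2 show ?thesis
      unfolding vote_share_def cell_share_def positions colocated by (auto simp: field_simps)
  next
    case 3
    with \<open>i \<noteq> j\<close> show ?thesis
      unfolding vote_share_def cell_share_def positions colocated by auto
  qed
qed

lemma vote_share_two_less_iff:
  assumes ij: "{i, j} = {0, 1::nat}"
  shows "vote_share 2 x j < vote_share 2 x i \<longleftrightarrow> \<bar>x i - 1/2\<bar> < \<bar>x j - 1/2\<bar>"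
proof -
  have ji: "{j, i} = {0, 1::nat}" using ij by (simp add: insert_commute)
  consider "x i < x j" | "x j < x i" | "x i = x j" by linarith
  then show ?thesis
    unfolding vote_share_two[OF ij] vote_share_two[OF ji]
    by cases (auto simp: abs_if field_simps)
qed

definition plurality2_le :: "real \<Rightarrow> real \<Rightarrow> real \<Rightarrow> real" where
  "plurality2_le a u v =
     (if \<bar>u - 1/2\<bar> < \<bar>v - 1/2\<bar> then of_bool (u \<le> a)
      else if \<bar>v - 1/2\<bar> < \<bar>u - 1/2\<bar> then of_bool (v \<le> a)
      else (of_bool (u \<le> a) + of_bool (v \<le> a)) / 2)"

lemma plurality_le_two: "plurality_le 2 x a = plurality2_le a (x 0) (x 1)"
proof -
  have less_iff: "vote_share 2 x 1 < vote_share 2 x 0 \<longleftrightarrow> \<bar>x 0 - 1/2\<bar> < \<bar>x 1 - 1/2\<bar>"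
    "vote_share 2 x 0 < vote_share 2 x 1 \<longleftrightarrow> \<bar>x 1 - 1/2\<bar> < \<bar>x 0 - 1/2\<bar>"
    using vote_share_two_less_iff[of 0 1 x] vote_share_two_less_iff[of 1 0 x]
    by (simp_all add: insert_commute)
  have winners: "winners 2 x =
      (if vote_share 2 x 1 < vote_share 2 x 0 then {0}
       else if vote_share 2 x 0 < vote_share 2 x 1 then {1} else {0, 1})"
    unfolding winners_def by (auto simp: less_2_cases_iff)
  have "{i \<in> {0, 1}. x i \<le> a} = {i. i = 0 \<and> x 0 \<le> a} \<union> {i. i = 1 \<and> x 1 \<le> a}"
    by auto
  then have "card {i \<in> {0, 1}. x i \<le> a} = of_bool (x 0 \<le> a) + of_bool (x 1 \<le> a)"
    by (cases "x 0 \<le> a"; cases "x 1 \<le> a") auto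
  moreover have "card {i \<in> {k}. x i \<le> a} = of_bool (x k \<le> a)" for k :: nat
    by (cases "x k \<le> a") (auto simp: Collect_conj_eq)
  ultimately show ?thesis
    unfolding plurality_le_def winners plurality2_le_def less_iff by auto
qed

text \<open>2 p^2 on [0, 1/2] and 1 - 2 (1 - p)^2 on [1/2, 1], written with max so that continuity
is immediate.\<close>
definition replicator2_map :: "real \<Rightarrow> real" where
  "replicator2_map p = 2 * p\<^sup>2 - 4 * (max (p - 1/2) 0)\<^sup>2"

lemma replicator2_map_low: "p \<le> 1/2 \<Longrightarrow> replicator2_map p = 2 * p\<^sup>2"
  by (simp add: replicator2_map_def)

lemma replicator2_map_high: "1/2 \<le> p \<Longrightarrow> replicator2_map p = 1 - 2 * (1 - p)\<^sup>2"
  by (cases "p = 1/2") (simp_all add: replicator2_map_def max_def power2_eq_square algebra_simps)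

lemma replicator2_map_reflect: "replicator2_map (1 - p) = 1 - replicator2_map p"
  by (cases "p \<le> 1/2") (simp_all add: replicator2_map_low replicator2_map_high)

lemma continuous_replicator2_map: "continuous_on UNIV replicator2_map"
  unfolding replicator2_map_def by (intro continuous_intros)

lemma replicator2_map_mono:
  assumes "0 \<le> p" "p \<le> q" "q \<le> 1"
  shows "replicator2_map p \<le> replicator2_map q"
proof -
  consider "q \<le> 1/2" | "1/2 \<le> p" | "p < 1/2" "1/2 < q" by linarith
  then show ?thesis
  proof cases
    case 1
    then show ?thesis using assms by (simp add: replicator2_map_low power_mono)
  next
    case 2
    then show ?thesis using assms by (simp add: replicator2_map_high power_mono)
  next
    case 3
    have "p\<^sup>2 \<le> 1/4" "(1 - q)\<^sup>2 \<le> 1/4"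
      using power_mono[of p "1/2" 2] power_mono[of "1 - q" "1/2" 2] 3 assms
      by (simp_all add: power_divide)
    then show ?thesis
      using 3 replicator2_map_low[of p] replicator2_map_high[of q] by simp
  qed
qed

lemma (in prob_space) distr_PiM_two:
  "distr (PiM {..<2::nat} (\<lambda>_. M)) (M \<Otimes>\<^sub>M M) (\<lambda>x. (x 0, x 1)) = M \<Otimes>\<^sub>M M"
proof (rule pair_measure_eqI[symmetric, OF sigma_finite_measure_axioms sigma_finite_measure_axioms])
  interpret product_prob_space "\<lambda>_. M" "{..<2::nat}" by unfold_locales
  show "sets (M \<Otimes>\<^sub>M M) = sets (distr (PiM {..<2::nat} (\<lambda>_. M)) (M \<Otimes>\<^sub>M M) (\<lambda>x. (x 0, x 1)))"
    by simp
  fix A B assume A: "A \<in> sets M" and B: "B \<in> sets M"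
  have preimage: "(\<lambda>x. (x 0, x 1)) -` (A \<times> B) \<inter> space (PiM {..<2::nat} (\<lambda>_. M))
      = Pi\<^sub>E {..<2} (\<lambda>i. if i = 0 then A else B)"
    using sets.sets_into_space[OF A] sets.sets_into_space[OF B]
    by (auto simp: space_PiM PiE_iff less_2_cases_iff numeral_2_eq_2 lessThan_Suc)
  have "emeasure (distr (PiM {..<2::nat} (\<lambda>_. M)) (M \<Otimes>\<^sub>M M) (\<lambda>x. (x 0, x 1))) (A \<times> B)
      = emeasure (PiM {..<2::nat} (\<lambda>_. M)) ((\<lambda>x. (x 0, x 1)) -` (A \<times> B) \<inter> space (PiM {..<2::nat} (\<lambda>_. M)))"
    using A B by (intro emeasure_distr) auto
  also have "\<dots> = emeasure (PiM {..<2::nat} (\<lambda>_. M)) (Pi\<^sub>E {..<2} (\<lambda>i. if i = 0 then A else B))"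
    by (simp only: preimage)
  also have "\<dots> = emeasure M A * emeasure M B"
    using A B by (subst emeasure_PiM) (simp_all add: lessThan_Suc numeral_2_eq_2 mult.commute)
  finally show "emeasure M A * emeasure M B
      = emeasure (distr (PiM {..<2::nat} (\<lambda>_. M)) (M \<Otimes>\<^sub>M M) (\<lambda>x. (x 0, x 1))) (A \<times> B)" ..
qed

lemma (in prob_space) integral_PiM_two:
  fixes f :: "'a \<times> 'a \<Rightarrow> real"
  assumes "f \<in> borel_measurable (M \<Otimes>\<^sub>M M)"
  shows "(\<integral>x. f (x 0, x 1) \<partial>PiM {..<2::nat} (\<lambda>_. M)) = (\<integral>p. f p \<partial>(M \<Otimes>\<^sub>M M))"
proof -
  have "(\<integral>p. f p \<partial>(M \<Otimes>\<^sub>M M))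
      = (\<integral>p. f p \<partial>distr (PiM {..<2::nat} (\<lambda>_. M)) (M \<Otimes>\<^sub>M M) (\<lambda>x. (x 0, x 1)))"
    by (simp only: distr_PiM_two)
  also have "\<dots> = (\<integral>x. f (x 0, x 1) \<partial>PiM {..<2::nat} (\<lambda>_. M))"
    using assms by (intro integral_distr) auto
  finally show ?thesis ..
qed

definition first_closer :: "(real \<times> real) set" where
  "first_closer = {p. \<bar>fst p - 1/2\<bar> < \<bar>snd p - 1/2\<bar>}"

locale calF =
  fixes F :: "real \<Rightarrow> real"
  assumes in_calF: "in_calF F"
begin

abbreviation "M \<equiv> interval_measure F"
abbreviation "P \<equiv> M \<Otimes>\<^sub>M M"

lemma F_mono: "x \<le> y \<Longrightarrow> F x \<le> F y"
  using in_calF unfolding in_calF_def mono_def by auto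

lemma F_reflect: "F (1 - x) = 1 - F x"
  using in_calF unfolding in_calF_def by auto

lemma F_half: "F (1/2) = 1/2"
  using F_reflect[of "1/2"] by simp

lemma F_le_half: "x \<le> 1/2 \<Longrightarrow> F x \<le> 1/2"
  using F_mono[of x "1/2"] F_half by simp

lemma F_ge_half: "1/2 \<le> x \<Longrightarrow> 1/2 \<le> F x"
  using F_mono[of "1/2" x] F_half by simp

lemma F_bounds: "0 \<le> F x" "F x \<le> 1"
proof -
  have "F (min x (-1)) = 0" "F (max x 1) = 1"
    using in_calF unfolding in_calF_def by auto
  then show "0 \<le> F x" "F x \<le> 1"
    using F_mono[of "min x (-1)" x] F_mono[of x "max x 1"] by auto
qed

lemma isCont_F: "isCont F x"
  using in_calF unfolding in_calF_def by (simp add: continuous_on_eq_continuous_at)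

lemma F_at_bot: "(F \<longlongrightarrow> 0) at_bot"
  using in_calF unfolding in_calF_def
  by (intro tendsto_eventually) (auto simp: eventually_at_bot_linorder intro: exI[of _ "-1"])

lemma F_at_top: "(F \<longlongrightarrow> 1) at_top"
  using in_calF unfolding in_calF_def
  by (intro tendsto_eventually) (auto simp: eventually_at_top_linorder intro: exI[of _ 1])

sublocale M: real_distribution M
  using F_mono isCont_F F_at_bot F_at_top
  by (intro real_distribution_interval_measure) (auto intro: continuous_at_imp_continuous_at_within)

lemma cdf_M: "cdf M = F"
  using F_mono isCont_F F_at_bot
  by (intro cdf_interval_measure) (auto intro: continuous_at_imp_continuous_at_within)

lemma measure_M_atMost: "measure M {..a} = F a"
  using cdf_M by (simp add: cdf_def fun_eq_iff)

lemma AE_M_neq: "AE y in M. y \<noteq> c"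
proof -
  have "measure M {c} = 0"
    using M.isCont_cdf[of c] isCont_F by (simp add: cdf_M)
  then show ?thesis
    by (intro AE_I[of _ _ "{c}"]) (auto simp: M.emeasure_eq_measure)
qed

lemma measure_M_lessThan: "measure M {..<a} = F a"
  using AE_M_neq[of a] by (subst measure_M_atMost[symmetric], intro measure_eq_AE) auto

lemma distr_M_reflect: "distr M borel (\<lambda>x. 1 - x) = M"
proof (rule cdf_unique)
  show "real_distribution (distr M borel (\<lambda>x. 1 - x))" by simp
  show "real_distribution M" by unfold_locales
  show "cdf (distr M borel (\<lambda>x. 1 - x)) = cdf M"
  proof
    fix a
    have "(\<lambda>x. 1 - x) -` {..a} \<inter> space M = space M - {..<1 - a}" by auto
    then have "cdf (distr M borel (\<lambda>x. 1 - x)) a = 1 - measure M {..<1 - a}"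
      using M.prob_compl[of "{..<1 - a}"] by (simp add: cdf_def measure_distr)
    also have "\<dots> = cdf M a"
      by (simp add: measure_M_lessThan F_reflect cdf_M)
    finally show "cdf (distr M borel (\<lambda>x. 1 - x)) a = cdf M a" .
  qed
qed

sublocale P: pair_prob_space M M by unfold_locales

lemma space_P: "space P = UNIV"
  by (simp add: space_pair_measure)

lemma sets_P_Collect: "Measurable.pred P Q \<Longrightarrow> {p. Q p} \<in> sets P"
  by (simp add: pred_def space_P)

lemma measure_P_product_map:
  assumes f: "f \<in> borel_measurable borel" "distr M borel f = M"
    and h: "h \<in> borel_measurable borel" "distr M borel h = M"
    and A: "A \<in> sets P"
  shows "measure P {p. (f (fst p), h (snd p)) \<in> A} = measure P A"
proof -
  have fM: "f \<in> borel_measurable M" and hM: "h \<in> borel_measurable M"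
    using f h by simp_all
  have "distr P (borel \<Otimes>\<^sub>M borel) (\<lambda>(x, y). (f x, h y)) = P"
    using pair_measure_distr[OF fM hM] f h by (simp add: M.sigma_finite_measure)
  then have "measure P A = measure (distr P (borel \<Otimes>\<^sub>M borel) (\<lambda>(x, y). (f x, h y))) A"
    by simp
  also have "\<dots> = measure P ((\<lambda>(x, y). (f x, h y)) -` A \<inter> space P)"
    using A fM hM by (intro measure_distr) auto
  finally show ?thesis
    by (simp add: space_P vimage_def case_prod_beta)
qed

lemma measure_P_swap:
  assumes "A \<in> sets P"
  shows "measure P {p. (snd p, fst p) \<in> A} = measure P A"
proof -
  have "measure P A = measure (distr P P (\<lambda>(x, y). (y, x))) A"
    by (simp flip: P.distr_pair_swap)
  also have "\<dots> = measure P ((\<lambda>(x, y). (y, x)) -` A \<inter> space P)"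
    using assms by (intro measure_distr) auto
  finally show ?thesis
    by (simp add: space_P vimage_def case_prod_beta)
qed

lemma AE_P_finite_sections:
  assumes Q: "Measurable.pred P Q" and finite: "\<And>x. finite {y. \<not> Q (x, y)}"
  shows "AE p in P. Q p"
proof (rule P.AE_pair_measure)
  show "{p \<in> space P. Q p} \<in> sets P"
    using Q by (simp add: pred_def)
  show "AE x in M. AE y in M. Q (x, y)"
  proof (rule AE_I2)
    fix x
    have "AE y in M. \<forall>c\<in>{y. \<not> Q (x, y)}. y \<noteq> c"
      by (intro AE_finite_allI finite AE_M_neq)
    then show "AE y in M. Q (x, y)"
      by eventually_elim auto
  qed
qed

lemma AE_P_no_tie: "AE p in P. \<bar>fst p - 1/2\<bar> \<noteq> \<bar>snd p - 1/2\<bar>"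
proof (rule AE_P_finite_sections)
  show "Measurable.pred P (\<lambda>p. \<bar>fst p - 1/2\<bar> \<noteq> \<bar>snd p - 1/2\<bar>)"
    by measurable
  fix x :: real
  have "{y. \<not> \<bar>fst (x, y) - 1/2\<bar> \<noteq> \<bar>snd (x, y) - 1/2\<bar>} \<subseteq> {x, 1 - x}"
    by (auto simp: abs_eq_iff)
  then show "finite {y. \<not> \<bar>fst (x, y) - 1/2\<bar> \<noteq> \<bar>snd (x, y) - 1/2\<bar>}"
    by (rule finite_subset) simp
qed

lemma AE_P_fst_neq: "AE p in P. fst p \<noteq> c"
proof (rule P.AE_pair_measure)
  show "{p \<in> space P. fst p \<noteq> c} \<in> sets P"
    by measurable
  show "AE x in M. AE y in M. fst (x, y) \<noteq> c"
    using AE_M_neq[of c] by eventually_elim simp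
qed

lemma sets_first_closer: "first_closer \<in> sets P"
  unfolding first_closer_def by (intro sets_P_Collect) measurable

lemma measure_P_first_closer: "measure P first_closer = 1/2"
proof -
  let ?swapped = "{p. (snd p, fst p) \<in> first_closer}"
  have sets: "first_closer \<in> sets P" "?swapped \<in> sets P"
    unfolding first_closer_def by (intro sets_P_Collect; measurable)+
  have ae: "AE p in P. p \<in> first_closer \<union> ?swapped \<longleftrightarrow> p \<in> space P"
    using AE_P_no_tie by eventually_elim (auto simp: first_closer_def space_P)
  have "measure P (first_closer \<union> ?swapped) = measure P (space P)"
    by (rule measure_eq_AE[OF ae sets.Un[OF sets] sets.top])
  then have "1 = measure P (first_closer \<union> ?swapped)"
    by (simp add: P.prob_space)
  also have "\<dots> = measure P first_closer + measure P ?swapped"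
    using sets by (intro P.finite_measure_Union) (auto simp: first_closer_def)
  also have "measure P ?swapped = measure P first_closer"
    using sets(1) by (rule measure_P_swap)
  finally show ?thesis by simp
qed

lemma measure_P_lower_triangle: "measure P {p. snd p < fst p \<and> fst p \<le> a} = (F a)\<^sup>2 / 2"
proof -
  let ?T = "{p. snd p < fst p \<and> fst p \<le> a}"
  let ?swapped = "{p. (snd p, fst p) \<in> ?T}"
  have sets: "?T \<in> sets P" "?swapped \<in> sets P"
    by (intro sets_P_Collect; measurable)+
  have square: "{..a} \<times> {..a} \<in> sets P"
    by simp
  have ae: "AE p in P. p \<in> ?T \<union> ?swapped \<longleftrightarrow> p \<in> {..a} \<times> {..a}"
    using AE_P_no_tie by eventually_elim auto
  have "(F a)\<^sup>2 = measure P ({..a} \<times> {..a})"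
    by (simp add: measure_def M.emeasure_pair_measure_Times enn2real_mult
        power2_eq_square flip: measure_M_atMost)
  also have "\<dots> = measure P (?T \<union> ?swapped)"
    by (rule measure_eq_AE[OF ae sets.Un[OF sets] square, symmetric])
  also have "\<dots> = measure P ?T + measure P ?swapped"
    using sets by (intro P.finite_measure_Union) auto
  also have "measure P ?swapped = measure P ?T"
    using sets(1) by (rule measure_P_swap)
  finally show ?thesis by simp
qed

lemma measure_P_first_closer_atMost_low:
  assumes "a \<le> 1/2"
  shows "measure P ({p. fst p \<le> a} \<inter> first_closer) = (F a)\<^sup>2"
proof -
  let ?T = "{p. snd p < fst p \<and> fst p \<le> a}"
  let ?reflected = "{p. (fst p, 1 - snd p) \<in> ?T}"
  have sets: "?T \<in> sets P" "?reflected \<in> sets P"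
    by (intro sets_P_Collect; measurable)+
  \<comment> \<open>Left of the centre, the first candidate is closer exactly when the second one lies
      outside the interval between it and its mirror image.\<close>
  have "{p. fst p \<le> a} \<inter> first_closer = ?T \<union> ?reflected"
    using assms by (auto simp: first_closer_def abs_if)
  moreover have "?T \<inter> ?reflected = {}"
    using assms by auto
  ultimately have "measure P ({p. fst p \<le> a} \<inter> first_closer) = measure P ?T + measure P ?reflected"
    using sets by (simp add: P.finite_measure_Union)
  also have "measure P ?reflected = measure P ?T"
    using sets(1) distr_M_reflect by (intro measure_P_product_map) (simp_all add: distr_id2)
  finally show ?thesis
    by (simp add: measure_P_lower_triangle)
qed

lemma measure_P_first_closer_atMost_reflect:
  "measure P ({p. fst p \<le> a} \<inter> first_closer) + measure P ({p. fst p \<le> 1 - a} \<inter> first_closer) = 1/2"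
proof -
  let ?A = "{p. fst p \<le> a} \<inter> first_closer"
  let ?B = "{p. a < fst p} \<inter> first_closer"
  let ?reflected = "{p. (1 - fst p, 1 - snd p) \<in> ?B}"
  have sets: "?A \<in> sets P" "?B \<in> sets P" "{p. fst p < 1 - a} \<inter> first_closer \<in> sets P"
    "{p. fst p \<le> 1 - a} \<inter> first_closer \<in> sets P"
    by (intro sets.Int sets_first_closer sets_P_Collect; measurable)+
  have "?A \<union> ?B = first_closer"
    by auto
  then have "1/2 = measure P (?A \<union> ?B)"
    by (simp add: measure_P_first_closer)
  also have "\<dots> = measure P ?A + measure P ?B"
    using sets by (intro P.finite_measure_Union) auto
  also have "measure P ?B = measure P ?reflected"
    using sets(2) distr_M_reflect by (intro measure_P_product_map[symmetric]) simp_all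
  also have "?reflected = {p. fst p < 1 - a} \<inter> first_closer"
    by (auto simp: first_closer_def abs_minus_commute)
  also have "measure P \<dots> = measure P ({p. fst p \<le> 1 - a} \<inter> first_closer)"
    using AE_P_fst_neq[of "1 - a"] sets(3,4) by (intro measure_eq_AE) auto
  finally show ?thesis ..
qed

lemma integral_P_plurality2_le:
  "(\<integral>p. plurality2_le a (fst p) (snd p) \<partial>P) = 2 * measure P ({p. fst p \<le> a} \<inter> first_closer)"
proof -
  let ?A = "{p. fst p \<le> a} \<inter> first_closer"
  let ?swapped = "{p. (snd p, fst p) \<in> ?A}"
  have sets: "?A \<in> sets P" "?swapped \<in> sets P"
    unfolding first_closer_def Int_def mem_Collect_eq by (intro sets_P_Collect; measurable)+
  have "AE p in P. plurality2_le a (fst p) (snd p) = indicator ?A p + indicator ?swapped p"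
    using AE_P_no_tie
    by eventually_elim (auto simp: plurality2_le_def first_closer_def indicator_def)
  then have "(\<integral>p. plurality2_le a (fst p) (snd p) \<partial>P) = (\<integral>p. indicator ?A p + indicator ?swapped p \<partial>P)"
    using sets by (intro integral_cong_AE) (auto simp: plurality2_le_def)
  also have "\<dots> = measure P ?A + measure P ?swapped"
    using sets by (simp add: space_P integrable_real_indicator P.emeasure_eq_measure)
  also have "measure P ?swapped = measure P ?A"
    using sets(1) by (rule measure_P_swap)
  finally show ?thesis by simp
qed

lemma integral_P_plurality2_le_eq:
  "(\<integral>p. plurality2_le a (fst p) (snd p) \<partial>P) = replicator2_map (F a)"
proof (cases "a \<le> 1/2")
  case True
  then show ?thesis
    by (simp add: integral_P_plurality2_le measure_P_first_closer_atMost_low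
        replicator2_map_low[OF F_le_half])
next
  case False
  then have "measure P ({p. fst p \<le> a} \<inter> first_closer) = 1/2 - (1 - F a)\<^sup>2"
    using measure_P_first_closer_atMost_reflect[of a]
      measure_P_first_closer_atMost_low[of "1 - a"] F_reflect[of a] by simp
  with False show ?thesis
    by (simp add: integral_P_plurality2_le replicator2_map_high[OF F_ge_half])
qed

lemma integral_plurality_le_two:
  "(\<integral>x. plurality_le 2 x a \<partial>PiM {..<2} (\<lambda>_. M)) = replicator2_map (F a)"
proof -
  have "(\<lambda>p. plurality2_le a (fst p) (snd p)) \<in> borel_measurable P"
    unfolding plurality2_le_def by measurable
  then show ?thesis
    using M.integral_PiM_two[of "\<lambda>p. plurality2_le a (fst p) (snd p)"]
    by (simp add: plurality_le_two integral_P_plurality2_le_eq)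
qed

lemma calF_replicator2_map: "in_calF (\<lambda>a. replicator2_map (F a))"
  unfolding in_calF_def
proof (intro conjI allI impI)
  show "mono (\<lambda>a. replicator2_map (F a))"
    by (intro monoI replicator2_map_mono F_mono F_bounds)
  show "continuous_on UNIV (\<lambda>a. replicator2_map (F a))"
    using continuous_on_compose2[OF continuous_replicator2_map, of UNIV F] in_calF
    by (simp add: in_calF_def)
  show "replicator2_map (F x) = 0" if "x < 0" for x
    using in_calF that by (simp add: in_calF_def replicator2_map_low)
  show "replicator2_map (F x) = 1" if "1 \<le> x" for x
    using in_calF that by (simp add: in_calF_def replicator2_map_high)
  show "replicator2_map (F (1 - x)) = 1 - replicator2_map (F x)" for x
    by (simp add: F_reflect replicator2_map_reflect)
qed

end

lemma replicator_two_Suc: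
  assumes "in_calF (replicator 2 F0 t)"
  shows "replicator 2 F0 (Suc t) = (\<lambda>a. replicator2_map (replicator 2 F0 t a))"
  using calF.integral_plurality_le_two[OF calF.intro, OF assms] by (simp add: fun_eq_iff)

lemma calF_replicator_two: "in_calF F0 \<Longrightarrow> in_calF (replicator 2 F0 t)"
proof (induction t)
  case (Suc t)
  then have "in_calF (replicator 2 F0 t)"
    by simp
  then show ?case
    using calF.calF_replicator2_map[OF calF.intro] by (simp only: replicator_two_Suc)
qed simp

theorem mainTheorem2:
  fixes F0 :: "real \<Rightarrow> real" and x :: real and t :: nat
  assumes "in_calF F0" and "x < 1/2"
  shows "replicator 2 F0 t x = (2 * F0 x) ^ (2 ^ t) / 2"
proof (induction t)
  case (Suc t)
  have calF: "in_calF (replicator 2 F0 t)"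
    using assms(1) by (rule calF_replicator_two)
  have "replicator 2 F0 (Suc t) x = replicator2_map (replicator 2 F0 t x)"
    by (simp only: replicator_two_Suc[OF calF])
  also have "\<dots> = 2 * (replicator 2 F0 t x)\<^sup>2"
    using calF.F_le_half[OF calF.intro, OF calF] assms(2) by (simp add: replicator2_map_low)
  also have "\<dots> = ((2 * F0 x) ^ (2 ^ t))\<^sup>2 / 2"
    by (simp add: Suc power_divide)
  also have "\<dots> = (2 * F0 x) ^ (2 ^ Suc t) / 2"
    by (simp only: power_Suc mult.commute[of 2 "2 ^ t"] power_mult)
  finally show ?case .
qed simp

end
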